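(* Fix a positive integer $n$, $\delta>0$, $\eta_0\in(0,1)$, $\lambda>0$, and $\epsilon_{\text{cov}},\epsilon_{\text{rel}}\in(0,1)$. Let the transmittance be deterministic, $\eta=\eta_0$, and let $\overline{n}_B\sim\mathrm{Exp}(\lambda)$ (density $\lambda e^{-\lambda x}$, $x\ge0$). Consider the risk-constrained program \[ \max_{q,R}\; qR \quad\text{s.t.}\quad \mathbb{P}\!\left[q>\tfrac{2\delta}{\sqrt{n}}\,c_{\text{cov}}(\eta_0,\overline{n}_B)\right]\le\epsilon_{\text{cov}},\quad \mathbb{P}\!\left[R>R_{\text{ach}}(\eta_0,\overline{n}_B)\right]\le\epsilon_{\text{rel}},\quad 0\le q\le1,\ 0\le R\le1. \] Then its optimum is $(q^*,R^* )=(q_{\max},R_{\max})$ with \[ q_{\max}=\min\!\left\{1,\ \frac{2\delta}{\sqrt n}\,k\sqrt{\frac{Z^2-1}{4\eta_0}}\right\},\qquad R_{\max}=\Big[1-H\big(\vec p(\eta_0,-\tfrac1\lambda\ln\epsilon_{\text{rel}})\big)\Big]^+, \] where $k=\dfrac{\sqrt{2\eta_0}}{1-\eta_0}$ and $Z=1-\dfrac{2\eta_0}{\lambda}\ln(1-\epsilon_{\text{cov}})$.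
   Context: Definitions: for $\eta\in(0,1)$ and $\overline{n}_B\ge0$, $c_{\text{cov}}(\eta,\overline{n}_B)=\dfrac{\sqrt{2\eta\overline{n}_B(1+\eta\overline{n}_B)}}{1-\eta}$; $p(\eta,\overline{n}_B)=1-\dfrac{\eta}{[1+(1-\eta)\overline{n}_B]^4}$; $\vec p(\eta,\overline{n}_B)=(1-\tfrac{3p}{4},\tfrac p4,\tfrac p4,\tfrac p4)$; $H(\vec p)=-\sum_i p_i\log_2p_i$ (with $0\log0=0$); $R_{\text{ach}}(\eta,\overline{n}_B)=(1-H(\vec p(\eta,\overline{n}_B)))^+$ with $(x)^+=\max(x,0)$. Probabilities are over the randomness of $\overline{n}_B$. *)

theory Defs
  imports "HOL-Probability.Probability"
begin

definition c_cov :: "real \<Rightarrow> real \<Rightarrow> real" where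
  "c_cov \<eta> nB = sqrt (2 * \<eta> * nB * (1 + \<eta> * nB)) / (1 - \<eta>)"

definition p_dep :: "real \<Rightarrow> real \<Rightarrow> real" where
  "p_dep \<eta> nB = 1 - \<eta> / (1 + (1 - \<eta>) * nB) ^ 4"

definition p_vec :: "real \<Rightarrow> real \<Rightarrow> real list" where
  "p_vec \<eta> nB = (let p = p_dep \<eta> nB in [1 - 3 * p / 4, p / 4, p / 4, p / 4])"

definition entropy :: "real list \<Rightarrow> real" where
  "entropy ps = - sum_list (map (\<lambda>x. if x = 0 then 0 else x * log 2 x) ps)"

definition R_ach :: "real \<Rightarrow> real \<Rightarrow> real" where
  "R_ach \<eta> nB = max (1 - entropy (p_vec \<eta> nB)) 0"

end

theory Submission
  imports Defs
begin

(* Both constraint functions are monotone in the noise nB: c_cov increases, and R_ach decreases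
   because p_dep increases in nB while the entropy of (1 - 3p/4, p/4, p/4, p/4) increases for
   p in (0, 1]. Under an exponential law, whose distribution function is continuous and strictly
   increasing on [0, oo), a chance constraint P[q > f(nB)] <= eps with f monotone and continuous
   therefore holds exactly when q <= f at the matching quantile: c_cov at -ln(1 - eps_cov)/lam,
   R_ach at -ln(eps_rel)/lam. The feasible set is the rectangle [0, q_max] x [0, R_max], and qR
   is maximal at its corner; q_max is c_cov at the quantile written via Z = 1 + 2 eta0 x. *)

context prob_space
begin

lemma chance_constraint_mono_iff:
  fixes X :: "'a \<Rightarrow> real" and f :: "real \<Rightarrow> real"
  assumes [measurable]: "X \<in> borel_measurable M" "f \<in> borel_measurable borel"
    and nonneg: "AE \<omega> in M. 0 \<le> X \<omega>"
    and mono: "mono_on {0..} f" and cont: "continuous (at_right t) f" and "0 \<le> t"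
    and cdf_strict: "\<And>x. t < x \<Longrightarrow> \<P>(\<omega> in M. X \<omega> \<le> t) < \<P>(\<omega> in M. X \<omega> \<le> x)"
  shows "\<P>(\<omega> in M. q > f (X \<omega>)) \<le> \<P>(\<omega> in M. X \<omega> \<le> t) \<longleftrightarrow> q \<le> f t"
proof
  assume le: "\<P>(\<omega> in M. q > f (X \<omega>)) \<le> \<P>(\<omega> in M. X \<omega> \<le> t)"
  show "q \<le> f t"
  proof (rule ccontr)
    assume "\<not> q \<le> f t"
    then have "\<forall>\<^sub>F x in at_right t. f x < q"
      using cont by (intro order_tendstoD) (auto simp: continuous_within)
    then obtain b where "t < b" and b: "\<And>x. t < x \<Longrightarrow> x < b \<Longrightarrow> f x < q"
      by (auto simp: eventually_at_right_field)
    define x where "x = (t + b) / 2"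
    have "t < x" "f x < q" using \<open>t < b\<close> b by (auto simp: x_def)
    have "AE \<omega> in M. X \<omega> \<le> x \<longrightarrow> q > f (X \<omega>)"
      using nonneg
    proof eventually_elim
      case (elim \<omega>)
      show ?case
        using mono_onD[OF mono, of "X \<omega>" x] elim \<open>t < x\<close> \<open>f x < q\<close> \<open>0 \<le> t\<close> by auto
    qed
    then have "\<P>(\<omega> in M. X \<omega> \<le> x) \<le> \<P>(\<omega> in M. q > f (X \<omega>))"
      by (intro finite_measure_mono_AE) auto
    with le cdf_strict[OF \<open>t < x\<close>] show False by linarith
  qed
next
  assume "q \<le> f t"
  have "X \<omega> \<le> t" if "q > f (X \<omega>)" for \<omega>
  proof (rule ccontr)
    assume "\<not> X \<omega> \<le> t"
    then have "f t \<le> f (X \<omega>)" using mono_onD[OF mono, of t "X \<omega>"] \<open>0 \<le> t\<close> by simp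
    with that \<open>q \<le> f t\<close> show False by linarith
  qed
  then have "{\<omega> \<in> space M. q > f (X \<omega>)} \<subseteq> {\<omega> \<in> space M. X \<omega> \<le> t}"
    by blast
  then show "\<P>(\<omega> in M. q > f (X \<omega>)) \<le> \<P>(\<omega> in M. X \<omega> \<le> t)"
    by (intro finite_measure_mono) auto
qed

lemma chance_constraint_antimono_iff:
  fixes X :: "'a \<Rightarrow> real" and g :: "real \<Rightarrow> real"
  assumes [measurable]: "X \<in> borel_measurable M" "g \<in> borel_measurable borel"
    and nonneg: "AE \<omega> in M. 0 \<le> X \<omega>"
    and antimono: "antimono_on {0..} g" and cont: "continuous (at_left t) g" and "0 < t"
    and tail_strict: "\<And>x. 0 \<le> x \<Longrightarrow> x < t \<Longrightarrow> \<P>(\<omega> in M. t < X \<omega>) < \<P>(\<omega> in M. x < X \<omega>)"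
  shows "\<P>(\<omega> in M. r > g (X \<omega>)) \<le> \<P>(\<omega> in M. t < X \<omega>) \<longleftrightarrow> r \<le> g t"
proof
  assume le: "\<P>(\<omega> in M. r > g (X \<omega>)) \<le> \<P>(\<omega> in M. t < X \<omega>)"
  show "r \<le> g t"
  proof (rule ccontr)
    assume "\<not> r \<le> g t"
    then have "\<forall>\<^sub>F x in at_left t. g x < r"
      using cont by (intro order_tendstoD) (auto simp: continuous_within)
    then obtain b where "b < t" and b: "\<And>x. b < x \<Longrightarrow> x < t \<Longrightarrow> g x < r"
      by (auto simp: eventually_at_left_field)
    define x where "x = (max b 0 + t) / 2"
    have "0 \<le> x" "x < t" "g x < r" using \<open>b < t\<close> \<open>0 < t\<close> b by (auto simp: x_def)
    have "g (X \<omega>) < r" if "x < X \<omega>" for \<omega>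
      using monotone_onD[OF antimono, of x "X \<omega>"] that \<open>0 \<le> x\<close> \<open>g x < r\<close> by simp
    then have "{\<omega> \<in> space M. x < X \<omega>} \<subseteq> {\<omega> \<in> space M. r > g (X \<omega>)}"
      by blast
    then have "\<P>(\<omega> in M. x < X \<omega>) \<le> \<P>(\<omega> in M. r > g (X \<omega>))"
      by (intro finite_measure_mono) auto
    with le tail_strict[OF \<open>0 \<le> x\<close> \<open>x < t\<close>] show False by linarith
  qed
next
  assume "r \<le> g t"
  have "AE \<omega> in M. r > g (X \<omega>) \<longrightarrow> t < X \<omega>"
    using nonneg
  proof eventually_elim
    case (elim \<omega>)
    show ?case
      using monotone_onD[OF antimono, of "X \<omega>" t] elim \<open>r \<le> g t\<close> \<open>0 < t\<close> by force
  qed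
  then show "\<P>(\<omega> in M. r > g (X \<omega>)) \<le> \<P>(\<omega> in M. t < X \<omega>)"
    by (intro finite_measure_mono_AE) auto
qed

lemma exponential_distributed_AE_pos:
  assumes D: "distributed M lborel X (exponential_density l)" and "0 < l"
  shows "AE \<omega> in M. 0 < X \<omega>"
proof -
  have "\<P>(\<omega> in M. 0 < X \<omega>) = 1"
    using exponential_distributedD_gt[OF D order_refl \<open>0 < l\<close>] by simp
  from AE_prob_1[OF this] show ?thesis by eventually_elim simp
qed

lemma exponential_chance_constraint_mono_iff:
  fixes f :: "real \<Rightarrow> real"
  assumes D: "distributed M lborel X (exponential_density l)" and "0 < l"
    and [measurable]: "f \<in> borel_measurable borel"
    and mono: "mono_on {0..} f" and cont: "continuous_on {0<..} f" and "0 < \<epsilon>" "\<epsilon> < 1"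
  shows "\<P>(\<omega> in M. q > f (X \<omega>)) \<le> \<epsilon> \<longleftrightarrow> q \<le> f (- ln (1 - \<epsilon>) / l)"
proof -
  define t where "t = - ln (1 - \<epsilon>) / l"
  have "0 < t"
    using assms by (simp add: t_def divide_neg_pos)
  have cdf: "\<P>(\<omega> in M. X \<omega> \<le> x) = 1 - exp (- x * l)" if "0 \<le> x" for x
    using exponential_distributedD_le[OF D that \<open>0 < l\<close>] .
  have "\<P>(\<omega> in M. X \<omega> \<le> t) = \<epsilon>"
    using cdf[of t] \<open>0 < t\<close> assms by (simp add: t_def)
  moreover have "\<P>(\<omega> in M. X \<omega> \<le> t) < \<P>(\<omega> in M. X \<omega> \<le> x)" if "t < x" for x
    using cdf[of t] cdf[of x] \<open>0 < t\<close> \<open>0 < l\<close> that by simp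
  moreover have "continuous (at_right t) f"
    using cont \<open>0 < t\<close>
    by (metis continuous_at_imp_continuous_at_within continuous_on_eq_continuous_at
        greaterThan_iff open_greaterThan)
  moreover have "AE \<omega> in M. 0 \<le> X \<omega>"
    using exponential_distributed_AE_pos[OF D \<open>0 < l\<close>] by eventually_elim simp
  moreover have "X \<in> borel_measurable M"
    using distributed_measurable[OF D] by simp
  ultimately show ?thesis
    using chance_constraint_mono_iff[of X f t q] mono \<open>0 < t\<close> by (simp add: t_def)
qed

lemma exponential_chance_constraint_antimono_iff:
  fixes g :: "real \<Rightarrow> real"
  assumes D: "distributed M lborel X (exponential_density l)" and "0 < l"
    and [measurable]: "g \<in> borel_measurable borel"
    and antimono: "antimono_on {0..} g" and cont: "continuous_on {0<..} g" and "0 < \<epsilon>" "\<epsilon> < 1"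
  shows "\<P>(\<omega> in M. r > g (X \<omega>)) \<le> \<epsilon> \<longleftrightarrow> r \<le> g (- ln \<epsilon> / l)"
proof -
  define t where "t = - ln \<epsilon> / l"
  have "0 < t"
    using assms by (simp add: t_def divide_neg_pos)
  have tail: "\<P>(\<omega> in M. x < X \<omega>) = exp (- x * l)" if "0 \<le> x" for x
    using exponential_distributedD_gt[OF D that \<open>0 < l\<close>] .
  have "\<P>(\<omega> in M. t < X \<omega>) = \<epsilon>"
    using tail[of t] \<open>0 < t\<close> assms by (simp add: t_def)
  moreover have "\<P>(\<omega> in M. t < X \<omega>) < \<P>(\<omega> in M. x < X \<omega>)" if "0 \<le> x" "x < t" for x
    using tail[of t] tail[of x] \<open>0 < t\<close> \<open>0 < l\<close> that by simp
  moreover have "continuous (at_left t) g"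
    using cont \<open>0 < t\<close>
    by (metis continuous_at_imp_continuous_at_within continuous_on_eq_continuous_at
        greaterThan_iff open_greaterThan)
  moreover have "AE \<omega> in M. 0 \<le> X \<omega>"
    using exponential_distributed_AE_pos[OF D \<open>0 < l\<close>] by eventually_elim simp
  moreover have "X \<in> borel_measurable M"
    using distributed_measurable[OF D] by simp
  ultimately show ?thesis
    using chance_constraint_antimono_iff[of X g t r] antimono \<open>0 < t\<close> by (simp add: t_def)
qed

end

lemma c_cov_mono: "0 \<le> \<eta> \<Longrightarrow> \<eta> < 1 \<Longrightarrow> mono_on {0..} (c_cov \<eta>)"
  unfolding c_cov_def
  by (intro mono_onI divide_right_mono real_sqrt_le_mono mult_mono) (auto intro: mult_left_mono)

lemma c_cov_nonneg: "0 \<le> \<eta> \<Longrightarrow> \<eta> < 1 \<Longrightarrow> 0 \<le> x \<Longrightarrow> 0 \<le> c_cov \<eta> x"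
  unfolding c_cov_def by simp

lemma continuous_on_c_cov: "\<eta> \<noteq> 1 \<Longrightarrow> continuous_on A (c_cov \<eta>)"
  unfolding c_cov_def by (intro continuous_intros) auto

lemma borel_measurable_c_cov [measurable]: "c_cov \<eta> \<in> borel_measurable borel"
  unfolding c_cov_def by measurable

lemma c_cov_eq_sqrt_Z:
  assumes "\<eta> \<noteq> 0"
  shows "sqrt (2 * \<eta>) / (1 - \<eta>) * sqrt (((1 + 2 * \<eta> * x)\<^sup>2 - 1) / (4 * \<eta>)) = c_cov \<eta> x"
proof -
  have "((1 + 2 * \<eta> * x)\<^sup>2 - 1) / (4 * \<eta>) = x * (1 + \<eta> * x)"
    using assms by (simp add: field_simps power2_eq_square)
  then show ?thesis
    unfolding c_cov_def by (simp add: real_sqrt_mult mult.assoc)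
qed

definition depolarizing_entropy :: "real \<Rightarrow> real" where
  "depolarizing_entropy p = - ((1 - 3 * p / 4) * log 2 (1 - 3 * p / 4)) - 3 * (p / 4 * log 2 (p / 4))"

lemma entropy_p_vec:
  "0 < p_dep \<eta> x \<Longrightarrow> p_dep \<eta> x < 4 / 3 \<Longrightarrow> entropy (p_vec \<eta> x) = depolarizing_entropy (p_dep \<eta> x)"
  by (simp add: entropy_def p_vec_def depolarizing_entropy_def Let_def)

lemma has_real_derivative_depolarizing_entropy:
  "0 < p \<Longrightarrow> p < 4 / 3 \<Longrightarrow>
    (depolarizing_entropy has_real_derivative 3 / 4 * (ln (1 - 3 * p / 4) - ln (p / 4)) / ln 2) (at p)"
  unfolding depolarizing_entropy_def log_def
  by (rule derivative_eq_intros refl | simp)+ (simp add: field_simps)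

lemma continuous_on_depolarizing_entropy: "continuous_on {0<..<4 / 3} depolarizing_entropy"
  unfolding depolarizing_entropy_def log_def by (intro continuous_intros) auto

lemma depolarizing_entropy_mono: "mono_on {0<..1} depolarizing_entropy"
proof (rule mono_onI)
  fix a b :: real assume a: "a \<in> {0<..1}" and b: "b \<in> {0<..1}" and "a \<le> b"
  show "depolarizing_entropy a \<le> depolarizing_entropy b"
  proof (rule DERIV_nonneg_imp_increasing_open[OF \<open>a \<le> b\<close>])
    fix x assume "a < x" "x < b"
    with a b have "0 < x" "x < 1" by auto
    then have "ln (x / 4) \<le> ln (1 - 3 * x / 4)" by simp
    then show "\<exists>y. (depolarizing_entropy has_real_derivative y) (at x) \<and> 0 \<le> y"
      using has_real_derivative_depolarizing_entropy[of x] \<open>0 < x\<close> \<open>x < 1\<close> by force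
  next
    show "continuous_on {a..b} depolarizing_entropy"
      using a b by (intro continuous_on_subset[OF continuous_on_depolarizing_entropy]) auto
  qed
qed

lemma depolarizing_entropy_nonneg:
  assumes "0 < p" "p \<le> 1"
  shows "0 \<le> depolarizing_entropy p"
proof -
  have "(1 - 3 * p / 4) * log 2 (1 - 3 * p / 4) \<le> 0" "p / 4 * log 2 (p / 4) \<le> 0"
    using assms by (auto intro!: mult_nonneg_nonpos)
  then show ?thesis unfolding depolarizing_entropy_def by linarith
qed

lemma p_dep_pos: "\<eta> < 1 \<Longrightarrow> 0 \<le> x \<Longrightarrow> 0 < p_dep \<eta> x"
proof -
  assume "\<eta> < 1" "0 \<le> x"
  then have "1 \<le> (1 + (1 - \<eta>) * x) ^ 4" by (intro one_le_power) simp
  with \<open>\<eta> < 1\<close> show ?thesis by (simp add: p_dep_def divide_less_eq)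
qed

lemma p_dep_le_one: "0 \<le> \<eta> \<Longrightarrow> p_dep \<eta> x \<le> 1"
  unfolding p_dep_def by simp

lemma p_dep_mono: "0 \<le> \<eta> \<Longrightarrow> \<eta> \<le> 1 \<Longrightarrow> mono_on {0..} (p_dep \<eta>)"
proof (rule mono_onI)
  fix x y :: real assume "0 \<le> \<eta>" "\<eta> \<le> 1" "x \<in> {0..}" "y \<in> {0..}" "x \<le> y"
  then have "0 \<le> (1 - \<eta>) * x" "(1 - \<eta>) * x \<le> (1 - \<eta>) * y"
    by (auto intro: mult_left_mono)
  then have "0 < (1 + (1 - \<eta>) * x) ^ 4"
    and "(1 + (1 - \<eta>) * x) ^ 4 \<le> (1 + (1 - \<eta>) * y) ^ 4"
    by (auto intro!: power_mono)
  with \<open>0 \<le> \<eta>\<close> have "\<eta> / (1 + (1 - \<eta>) * y) ^ 4 \<le> \<eta> / (1 + (1 - \<eta>) * x) ^ 4"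
    by (intro divide_left_mono mult_pos_pos) auto
  then show "p_dep \<eta> x \<le> p_dep \<eta> y"
    unfolding p_dep_def by simp
qed

lemma continuous_on_p_dep: "\<eta> \<le> 1 \<Longrightarrow> continuous_on {0..} (p_dep \<eta>)"
  unfolding p_dep_def by (intro continuous_intros) (auto simp: add_nonneg_eq_0_iff)

lemma R_ach_eq:
  assumes "0 \<le> \<eta>" "\<eta> < 1" "0 \<le> x"
  shows "R_ach \<eta> x = max (1 - depolarizing_entropy (p_dep \<eta> x)) 0"
proof -
  have "0 < p_dep \<eta> x" "p_dep \<eta> x < 4 / 3"
    using p_dep_pos[of \<eta> x] p_dep_le_one[of \<eta> x] assms by auto
  then show ?thesis unfolding R_ach_def by (simp add: entropy_p_vec)
qed

lemma R_ach_antimono: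
  assumes "0 \<le> \<eta>" "\<eta> < 1"
  shows "antimono_on {0..} (R_ach \<eta>)"
proof (rule monotone_onI)
  fix x y :: real assume "x \<in> {0..}" "y \<in> {0..}" "x \<le> y"
  with assms have "depolarizing_entropy (p_dep \<eta> x) \<le> depolarizing_entropy (p_dep \<eta> y)"
    using p_dep_pos p_dep_le_one mono_onD[OF p_dep_mono]
    by (intro mono_onD[OF depolarizing_entropy_mono]) auto
  with assms \<open>x \<in> {0..}\<close> \<open>y \<in> {0..}\<close> show "R_ach \<eta> y \<le> R_ach \<eta> x"
    by (simp add: R_ach_eq)
qed

lemma R_ach_le_one: "0 \<le> \<eta> \<Longrightarrow> \<eta> < 1 \<Longrightarrow> 0 \<le> x \<Longrightarrow> R_ach \<eta> x \<le> 1"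
  using depolarizing_entropy_nonneg[OF p_dep_pos p_dep_le_one] by (simp add: R_ach_eq)

lemma continuous_on_R_ach:
  assumes "0 \<le> \<eta>" "\<eta> < 1"
  shows "continuous_on {0..} (R_ach \<eta>)"
proof -
  have "p_dep \<eta> x \<in> {0<..<4 / 3}" if "0 \<le> x" for x
    using p_dep_pos[of \<eta> x] p_dep_le_one[of \<eta> x] assms that by simp
  then have "p_dep \<eta> ` {0..} \<subseteq> {0<..<4 / 3}"
    by auto
  with assms have "continuous_on {0..} (\<lambda>x. depolarizing_entropy (p_dep \<eta> x))"
    by (intro continuous_on_compose2[OF continuous_on_depolarizing_entropy continuous_on_p_dep]) auto
  then have "continuous_on {0..} (\<lambda>x. max (1 - depolarizing_entropy (p_dep \<eta> x)) 0)"
    by (intro continuous_intros)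
  then show ?thesis
    by (rule continuous_on_cong[THEN iffD1, rotated 2]) (simp_all add: R_ach_eq assms)
qed

lemma borel_measurable_R_ach [measurable]: "R_ach \<eta> \<in> borel_measurable borel"
  unfolding R_ach_def entropy_def p_vec_def p_dep_def Let_def by simp measurable

context prob_space
begin

lemma exponential_chance_constraint_c_cov_iff:
  assumes D: "distributed M lborel X (exponential_density l)" and "0 < l"
    and "0 \<le> a" "0 \<le> \<eta>" "\<eta> < 1" "0 < \<epsilon>" "\<epsilon> < 1"
  shows "\<P>(\<omega> in M. q > a * c_cov \<eta> (X \<omega>)) \<le> \<epsilon> \<longleftrightarrow> q \<le> a * c_cov \<eta> (- ln (1 - \<epsilon>) / l)"
proof -
  have "mono_on {0..} (\<lambda>x. a * c_cov \<eta> x)"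
    using mono_on_mul[OF mono_on_const c_cov_mono] c_cov_nonneg assms by auto
  moreover have "continuous_on {0<..} (\<lambda>x. a * c_cov \<eta> x)"
    using \<open>\<eta> < 1\<close> by (intro continuous_intros continuous_on_c_cov) simp
  moreover have "(\<lambda>x. a * c_cov \<eta> x) \<in> borel_measurable borel"
    by measurable
  ultimately show ?thesis
    using exponential_chance_constraint_mono_iff[OF D \<open>0 < l\<close>, of "\<lambda>x. a * c_cov \<eta> x"] assms
    by simp
qed

lemma exponential_chance_constraint_R_ach_iff:
  assumes D: "distributed M lborel X (exponential_density l)" and "0 < l"
    and "0 \<le> \<eta>" "\<eta> < 1" "0 < \<epsilon>" "\<epsilon> < 1"
  shows "\<P>(\<omega> in M. r > R_ach \<eta> (X \<omega>)) \<le> \<epsilon> \<longleftrightarrow> r \<le> R_ach \<eta> (- ln \<epsilon> / l)"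
proof -
  have "continuous_on {0<..} (R_ach \<eta>)"
    by (rule continuous_on_subset[OF continuous_on_R_ach]) (use assms in auto)
  then show ?thesis
    using exponential_chance_constraint_antimono_iff[OF D \<open>0 < l\<close> borel_measurable_R_ach
        R_ach_antimono] assms
    by simp
qed

end

theorem lemma1:
  fixes M :: "'a measure" and X :: "'a \<Rightarrow> real"
    and n :: nat and \<delta> \<eta>0 lam \<epsilon>cov \<epsilon>rel :: real
  assumes "prob_space M"
    and "distributed M lborel X (exponential_density lam)"
    and "0 < n" and "0 < \<delta>" and "0 < \<eta>0" and "\<eta>0 < 1" and "0 < lam"
    and "0 < \<epsilon>cov" and "\<epsilon>cov < 1" and "0 < \<epsilon>rel" and "\<epsilon>rel < 1"
  defines "feasible \<equiv> \<lambda>q R.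
              measure M {\<omega> \<in> space M. q > 2 * \<delta> / sqrt (real n) * c_cov \<eta>0 (X \<omega>)} \<le> \<epsilon>cov
            \<and> measure M {\<omega> \<in> space M. R > R_ach \<eta>0 (X \<omega>)} \<le> \<epsilon>rel
            \<and> 0 \<le> q \<and> q \<le> 1 \<and> 0 \<le> R \<and> R \<le> 1"
    and "q_max \<equiv> (let k = sqrt (2 * \<eta>0) / (1 - \<eta>0);
                        Z = 1 - 2 * \<eta>0 / lam * ln (1 - \<epsilon>cov)
                    in min 1 (2 * \<delta> / sqrt (real n) * k * sqrt ((Z\<^sup>2 - 1) / (4 * \<eta>0))))"
    and "R_max \<equiv> max (1 - entropy (p_vec \<eta>0 (- (1 / lam) * ln \<epsilon>rel))) 0"
  shows "feasible q_max R_max \<and> (\<forall>q R. feasible q R \<longrightarrow> q * R \<le> q_max * R_max)"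
proof -
  interpret prob_space M by fact
  note D = \<open>distributed M lborel X (exponential_density lam)\<close>
  have \<eta>0: "0 \<le> \<eta>0" "\<eta>0 < 1" "\<eta>0 \<noteq> 0"
    using \<open>0 < \<eta>0\<close> \<open>\<eta>0 < 1\<close> by simp_all
  define a where "a = 2 * \<delta> / sqrt (real n)"
  define x_cov where "x_cov = - ln (1 - \<epsilon>cov) / lam"
  define x_rel where "x_rel = - ln \<epsilon>rel / lam"
  have "0 < a"
    using \<open>0 < n\<close> \<open>0 < \<delta>\<close> by (simp add: a_def)
  have "0 < x_cov" "0 < x_rel"
    using \<open>0 < lam\<close> \<open>0 < \<epsilon>cov\<close> \<open>\<epsilon>cov < 1\<close> \<open>0 < \<epsilon>rel\<close> \<open>\<epsilon>rel < 1\<close>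
    by (simp_all add: x_cov_def x_rel_def divide_neg_pos)
  have Z: "1 - 2 * \<eta>0 / lam * ln (1 - \<epsilon>cov) = 1 + 2 * \<eta>0 * x_cov"
    by (simp add: x_cov_def)
  have "q_max = min 1
      (a * (sqrt (2 * \<eta>0) / (1 - \<eta>0) * sqrt (((1 + 2 * \<eta>0 * x_cov)\<^sup>2 - 1) / (4 * \<eta>0))))"
    unfolding q_max_def Let_def Z a_def by (simp only: mult.assoc)
  then have q_max: "q_max = min 1 (a * c_cov \<eta>0 x_cov)"
    by (simp only: c_cov_eq_sqrt_Z[OF \<eta>0(3)])
  have R_max: "R_max = R_ach \<eta>0 x_rel"
    by (simp add: R_max_def R_ach_def x_rel_def)
  have "R_max \<le> 1"
    using R_ach_le_one[OF \<eta>0(1,2)] \<open>0 < x_rel\<close> by (simp add: R_max)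
  then have feasible_iff: "feasible q r \<longleftrightarrow> 0 \<le> q \<and> q \<le> q_max \<and> 0 \<le> r \<and> r \<le> R_max" for q r
    using exponential_chance_constraint_c_cov_iff
        [OF D \<open>0 < lam\<close> _ \<eta>0(1,2) \<open>0 < \<epsilon>cov\<close> \<open>\<epsilon>cov < 1\<close>]
      exponential_chance_constraint_R_ach_iff[OF D \<open>0 < lam\<close> \<eta>0(1,2) \<open>0 < \<epsilon>rel\<close> \<open>\<epsilon>rel < 1\<close>]
      \<open>0 < a\<close>
    unfolding feasible_def a_def[symmetric] x_cov_def[symmetric] x_rel_def[symmetric]
    by (auto simp: q_max R_max)
  have "0 \<le> q_max" "0 \<le> R_max"
    using c_cov_nonneg[OF \<eta>0(1,2)] \<open>0 < a\<close> \<open>0 < x_cov\<close> by (simp_all add: q_max R_max R_ach_def)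
  then show ?thesis
    by (auto simp: feasible_iff intro: mult_mono)
qed

end
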